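(* Let $\pi$ be a propositional formula and $\varphi$ a formula of the basic modal language (built from $\top$, atoms, $\lnot$, $\land$, $\Box$). Then the formula $(\Box\pi\land\varphi)\to[\dagger\pi][!\pi]\varphi$ is true at every world of every transitive model.
   Context: Fix a countable non-empty set $\mathit{At}$ of atoms. A model is $\mathcal{M}=\langle W,R,V\rangle$, $W\neq\varnothing$, $R\subseteq W\times W$, $V:\mathit{At}\to\mathcal{P}(W)$, with standard Kripke semantics ($\mathcal{M},w\models\Box\psi$ iff $\psi$ holds at all $R$-successors of $w$); it is transitive if $R$ is transitive. A literal is an atom or its negation; a clause is a finite set $D$ of literals read as $\bigvee D$ ($\bigvee\varnothing:=\bot$), tautological if it contains $p$ and $\lnot p$ for some $p$. For propositional $\pi$, $\mathcal{C}(\pi)$ is the set of non-tautological clauses $D$ with $\models\pi\to\bigvee D$ and no $D'\subsetneq D$ with $\models\pi\to\bigvee D'$. For a model $\mathcal{M}$ and a non-tautological clause $D$, $\mathcal{M}^{(D)}_u=\langle W',R',V'\rangle$ has $W'=W\times\{0,1\}$, $(w,i)R'(v,j)$ iff $wRv$, $(w,0)\in V'(p)$ iff $w\in V(p)$, and $(w,1)\in V'(p)$ iff $\lnot p\in D$, or $\{p,\lnot p\}\cap D=\varnothing$ and $w\in V(p)$. Forgetting: $\mathcal{M},w\models[\dagger\pi]\psi$ iff for all $D\in\mathcal{C}(\pi)$, $\mathcal{M}^{(D)}_u,(w,0)\models\psi$. Public announcement: $\mathcal{M},w\models[!\pi]\psi$ iff ($\mathcal{M},w\models\pi$ implies $\mathcal{M}|_\pi,w\models\psi$),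 where $\mathcal{M}|_\pi$ is the restriction of $\mathcal{M}$ (domain, relation and valuation) to the set of worlds of $\mathcal{M}$ satisfying $\pi$. *)

theory Defs
  imports "HOL-Library.Countable"
begin

datatype 'a fm = Top | Atom 'a | Neg "'a fm" | Conj "'a fm" "'a fm" | Box "'a fm"

definition Impl :: "'a fm \<Rightarrow> 'a fm \<Rightarrow> 'a fm" where
  "Impl f g = Neg (Conj f (Neg g))"

fun is_prop :: "'a fm \<Rightarrow> bool" where
  "is_prop Top = True"
| "is_prop (Atom p) = True"
| "is_prop (Neg f) = is_prop f"
| "is_prop (Conj f g) = (is_prop f \<and> is_prop g)"
| "is_prop (Box f) = False"

record ('a, 'w) kmodel =
  W :: "'w set"
  R :: "('w \<times> 'w) set"
  V :: "'a \<Rightarrow> 'w set"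

definition is_model :: "('a, 'w) kmodel \<Rightarrow> bool" where
  "is_model M \<longleftrightarrow> W M \<noteq> {} \<and> R M \<subseteq> W M \<times> W M \<and> (\<forall>p. V M p \<subseteq> W M)"

definition transitive_model :: "('a, 'w) kmodel \<Rightarrow> bool" where
  "transitive_model M \<longleftrightarrow> is_model M \<and> trans (R M)"

fun sat :: "('a, 'w) kmodel \<Rightarrow> 'w \<Rightarrow> 'a fm \<Rightarrow> bool" where
  "sat M w Top = True"
| "sat M w (Atom p) = (w \<in> V M p)"
| "sat M w (Neg f) = (\<not> sat M w f)"
| "sat M w (Conj f g) = (sat M w f \<and> sat M w g)"
| "sat M w (Box f) = (\<forall>v. (w, v) \<in> R M \<longrightarrow> sat M v f)"

datatype 'a literal = Pos 'a | NegL 'a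

fun lit_val :: "('a \<Rightarrow> bool) \<Rightarrow> 'a literal \<Rightarrow> bool" where
  "lit_val v (Pos p) = v p"
| "lit_val v (NegL p) = (\<not> v p)"

text \<open>Classical propositional evaluation (only meaningful on propositional formulas).\<close>
fun pval :: "('a \<Rightarrow> bool) \<Rightarrow> 'a fm \<Rightarrow> bool" where
  "pval v Top = True"
| "pval v (Atom p) = v p"
| "pval v (Neg f) = (\<not> pval v f)"
| "pval v (Conj f g) = (pval v f \<and> pval v g)"
| "pval v (Box f) = undefined"

definition tautological :: "'a literal set \<Rightarrow> bool" where
  "tautological D \<longleftrightarrow> (\<exists>p. Pos p \<in> D \<and> NegL p \<in> D)"

definition entails_clause :: "'a fm \<Rightarrow> 'a literal set \<Rightarrow> bool" where
  "entails_clause \<pi> D \<longleftrightarrow> (\<forall>v. pval v \<pi> \<longrightarrow> (\<exists>l\<in>D. lit_val v l))"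

definition clauses :: "'a fm \<Rightarrow> 'a literal set set" where
  "clauses \<pi> = {D. finite D \<and> \<not> tautological D \<and> entails_clause \<pi> D \<and>
                    (\<forall>D'. D' \<subset> D \<longrightarrow> \<not> entails_clause \<pi> D')}"

text \<open>Copy 0 is False, copy 1 is True.\<close>
definition upd_model :: "('a, 'w) kmodel \<Rightarrow> 'a literal set \<Rightarrow> ('a, 'w \<times> bool) kmodel" where
  "upd_model M D = \<lparr> W = W M \<times> UNIV,
     R = {((w, i), (v, j)). (w, v) \<in> R M},
     V = (\<lambda>p. {(w, i). w \<in> W M \<and>
                 (if i then (NegL p \<in> D \<or> (Pos p \<notin> D \<and> NegL p \<notin> D \<and> w \<in> V M p))
                  else w \<in> V M p)}) \<rparr>"

definition restrict_model :: "('a, 'w) kmodel \<Rightarrow> 'a fm \<Rightarrow> ('a, 'w) kmodel" where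
  "restrict_model M \<pi> = (let S = {w \<in> W M. sat M w \<pi>} in
     \<lparr> W = S, R = R M \<inter> (S \<times> S), V = (\<lambda>p. V M p \<inter> S) \<rparr>)"

definition sat_announce :: "('a, 'w) kmodel \<Rightarrow> 'w \<Rightarrow> 'a fm \<Rightarrow> 'a fm \<Rightarrow> bool" where
  "sat_announce M w \<pi> \<phi> \<longleftrightarrow> (sat M w \<pi> \<longrightarrow> sat (restrict_model M \<pi>) w \<phi>)"

text \<open>M, w |= [dagger pi] psi, where the satisfaction of psi in the updated model is given by Q\<close>
definition sat_forget :: "('a, 'w) kmodel \<Rightarrow> 'w \<Rightarrow> 'a fm
      \<Rightarrow> (('a, 'w \<times> bool) kmodel \<Rightarrow> 'w \<times> bool \<Rightarrow> bool) \<Rightarrow> bool" where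
  "sat_forget M w \<pi> Q \<longleftrightarrow> (\<forall>D\<in>clauses \<pi>. Q (upd_model M D) (w, False))"

end

theory Submission
  imports Defs
begin

text \<open>In the update model the copy-0 worlds reproduce M, while every copy-1 world falsifies each
  literal of the clause D and hence, since \<pi> entails D, falsifies \<pi>. Announcing \<pi> therefore deletes
  all copy-1 worlds and keeps exactly the copy-0 worlds of the \<pi>-worlds of M. The world w itself
  satisfies \<pi> whenever the announcement is evaluated at all, and \<open>\<Box>\<pi>\<close> at w propagates by
  transitivity to every reachable world; so nothing reachable from w is deleted and the truth of
  \<phi> is unchanged.\<close>

lemma restrict_model_simps:
  "W (restrict_model M \<pi>) = {w \<in> W M. sat M w \<pi>}"
  "R (restrict_model M \<pi>) = R M \<inter> (W (restrict_model M \<pi>) \<times> W (restrict_model M \<pi>))"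
  "V (restrict_model M \<pi>) p = V M p \<inter> W (restrict_model M \<pi>)"
  by (simp_all add: restrict_model_def Let_def)

lemma upd_model_simps:
  "W (upd_model M D) = W M \<times> UNIV"
  "((u, i), (v, j)) \<in> R (upd_model M D) \<longleftrightarrow> (u, v) \<in> R M"
  "(u, False) \<in> V (upd_model M D) p \<longleftrightarrow> u \<in> W M \<and> u \<in> V M p"
  by (simp_all add: upd_model_def)

lemma sat_eq_pval: "is_prop f \<Longrightarrow> sat M x f = pval (\<lambda>p. x \<in> V M p) f"
  by (induction f) auto

lemma sat_upd_model_copy0:
  "is_prop f \<Longrightarrow> u \<in> W M \<Longrightarrow> sat (upd_model M D) (u, False) f = sat M u f"
  by (induction f) (auto simp: upd_model_def)

lemma not_sat_upd_model_copy1: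
  assumes "is_prop \<pi>" "\<not> tautological D" "entails_clause \<pi> D" "v \<in> W M"
  shows "\<not> sat (upd_model M D) (v, True) \<pi>"
proof
  let ?val = "\<lambda>p. (v, True) \<in> V (upd_model M D) p"
  assume "sat (upd_model M D) (v, True) \<pi>"
  then have "pval ?val \<pi>"
    using sat_eq_pval[OF assms(1)] by metis
  then obtain l where "l \<in> D" "lit_val ?val l"
    using assms(3) unfolding entails_clause_def by blast
  then show False
    using assms(2,4) unfolding tautological_def
    by (cases l) (auto simp: upd_model_def)
qed

lemma W_restrict_upd_model:
  assumes "is_prop \<pi>" "\<not> tautological D" "entails_clause \<pi> D"
  shows "W (restrict_model (upd_model M D) \<pi>) = {(u, False) | u. u \<in> W M \<and> sat M u \<pi>}"
proof -
  have "(u, i) \<in> W (restrict_model (upd_model M D) \<pi>) \<longleftrightarrow> \<not> i \<and> u \<in> W M \<and> sat M u \<pi>"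
    for u i
    using not_sat_upd_model_copy1[OF assms, of _ M] sat_upd_model_copy0[OF assms(1), of _ M D]
    by (cases i) (auto simp: restrict_model_simps(1) upd_model_simps(1))
  then show ?thesis
    by auto
qed

lemma sat_restrict_upd_model:
  assumes M: "transitive_model M"
    and \<pi>: "is_prop \<pi>" "\<not> tautological D" "entails_clause \<pi> D"
    and u: "u \<in> W M" "sat M u \<pi>" "\<forall>v. (u, v) \<in> R M \<longrightarrow> sat M v \<pi>"
  shows "sat (restrict_model (upd_model M D) \<pi>) (u, False) \<phi> = sat M u \<phi>"
  using u
proof (induction \<phi> arbitrary: u)
  let ?N = "restrict_model (upd_model M D) \<pi>"
  have RW: "R M \<subseteq> W M \<times> W M" and VW: "\<And>p. V M p \<subseteq> W M" and tr: "trans (R M)"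
    using M unfolding transitive_model_def is_model_def by auto
  note WN = W_restrict_upd_model[OF \<pi>]
  {
    case (Atom p)
    then show ?case
      using VW by (auto simp: restrict_model_simps(3) WN upd_model_simps(3))
  next
    case (Box f u)
    have successors: "((u, False), x) \<in> R ?N \<longleftrightarrow> (\<exists>v. x = (v, False) \<and> (u, v) \<in> R M)" for x
      using Box.prems RW by (auto simp: restrict_model_simps(2) WN upd_model_simps(2))
    have "sat ?N (v, False) f = sat M v f" if "(u, v) \<in> R M" for v
    proof (rule Box.IH)
      show "v \<in> W M" "sat M v \<pi>"
        using that RW Box.prems by auto
      show "\<forall>v'. (v, v') \<in> R M \<longrightarrow> sat M v' \<pi>"
        using that Box.prems tr by (meson transD)
    qed
    then show ?case
      using successors by auto
  }
qed simp_all

theorem proposition4: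
  fixes M :: "('a::countable, 'w) kmodel" and \<pi> \<phi> :: "'a fm" and w :: 'w
  assumes "transitive_model M" and "w \<in> W M" and "is_prop \<pi>"
  shows "(sat M w (Box \<pi>) \<and> sat M w \<phi>) \<longrightarrow>
         sat_forget M w \<pi> (\<lambda>M' w'. sat_announce M' w' \<pi> \<phi>)"
  unfolding sat_forget_def sat_announce_def
proof (intro impI ballI)
  fix D
  assume w: "sat M w (Box \<pi>) \<and> sat M w \<phi>" and "D \<in> clauses \<pi>"
    and "sat (upd_model M D) (w, False) \<pi>"
  then have D: "\<not> tautological D" "entails_clause \<pi> D" and "sat M w \<pi>"
    using sat_upd_model_copy0[OF assms(3,2)] unfolding clauses_def by auto
  moreover have "\<forall>v. (w, v) \<in> R M \<longrightarrow> sat M v \<pi>"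
    using w by simp
  ultimately show "sat (restrict_model (upd_model M D) \<pi>) (w, False) \<phi>"
    using sat_restrict_upd_model[OF assms(1,3) D assms(2)] w by simp
qed

end
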